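(* Let $n\ge 3$. The $S$-algebra $(\mathbb{C}\langle u,v\rangle^{D_{2n}},\circ)$ is generated as an $S$-algebra by the two elements $uv+vu$ and $u^n+v^n$; that is, the smallest $S$-subalgebra of $\mathbb{C}\langle u,v\rangle$ containing $uv+vu$ and $u^n+v^n$ equals $\mathbb{C}\langle u,v\rangle^{D_{2n}}$.
   Context: $\mathbb{C}\langle u,v\rangle$ is the free associative unital algebra over $\mathbb C$ on noncommuting $u,v$; $\mathbb{C}\langle u,v\rangle^{(k)}$ is its homogeneous component of total degree $k$. The dihedral group $D_{2n}=\langle\rho,\tau\mid \rho^n=\tau^2=(\tau\rho)^2=1\rangle$ acts on $\mathbb{C}\langle u,v\rangle$ by algebra automorphisms determined by $\rho(u)=\xi u$, $\rho(v)=\xi^{-1}v$, $\tau(u)=v$, $\tau(v)=u$, $\xi=e^{2\pi i/n}$, and $\mathbb{C}\langle u,v\rangle^{D_{2n}}$ is the algebra of fixed points. (Koryukin's position action) For each $k$, the symmetric group $\mathrm{Sym}(k)$ acts on $\mathbb{C}\langle u,v\rangle^{(k)}$ from the right by permuting positions: for a monomial $x_{i_1}\cdots x_{i_k}$ with $x_{i_j}\in\{u,v\}$ and $\pi\in\mathrm{Sym}(k)$, $(x_{i_1}\cdots x_{i_k})\circ\pi=x_{i_{\pi^{-1}(1)}}\cdots x_{i_{\pi^{-1}(k)}}$, extended linearly. An $S$-subalgebra is a graded (unital) subalgebra $F=\bigoplus_k F^{(k)}$ of $\mathbb{C}\langle u,v\rangle$ with $F^{(k)}\circ\mathrm{Sym}(k)=F^{(k)}$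 for all $k$; the $S$-subalgebra generated by a set of homogeneous elements is the smallest $S$-subalgebra containing it. *)

theory Defs
  imports "HOL-Combinatorics.Permutations" Complex_Main
begin

text \<open>Model of the free algebra C<u,v>: a function from words (bool lists,
 False = u, True = v) to complex coefficients with finite support.\<close>

type_synonym fa = "bool list \<Rightarrow> complex"

definition fa_carrier :: "fa set" where
  "fa_carrier = {f. finite {w. f w \<noteq> 0}}"

definition fa_zero :: fa where "fa_zero = (\<lambda>w. 0)"
definition fa_one :: fa where "fa_one = (\<lambda>w. if w = [] then 1 else 0)"
definition fa_add :: "fa \<Rightarrow> fa \<Rightarrow> fa" where "fa_add f g = (\<lambda>w. f w + g w)"
definition fa_smult :: "complex \<Rightarrow> fa \<Rightarrow> fa" where "fa_smult c f = (\<lambda>w. c * f w)"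
definition fa_mult :: "fa \<Rightarrow> fa \<Rightarrow> fa" where
  "fa_mult f g = (\<lambda>w. \<Sum>i\<le>length w. f (take i w) * g (drop i w))"

primrec fa_pow :: "fa \<Rightarrow> nat \<Rightarrow> fa" where
  "fa_pow f 0 = fa_one"
| "fa_pow f (Suc m) = fa_mult f (fa_pow f m)"

definition fa_mono :: "bool list \<Rightarrow> fa" where
  "fa_mono w0 = (\<lambda>w. if w = w0 then 1 else 0)"

definition fa_u :: fa where "fa_u = fa_mono [False]"
definition fa_v :: fa where "fa_v = fa_mono [True]"

definition hom_part :: "nat \<Rightarrow> fa \<Rightarrow> fa" where
  "hom_part k f = (\<lambda>w. if length w = k then f w else 0)"

definition homogeneous :: "nat \<Rightarrow> fa \<Rightarrow> bool" where
  "homogeneous k f \<longleftrightarrow> (\<forall>w. length w \<noteq> k \<longrightarrow> f w = 0)"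

text \<open>Koryukin's position action of pi (a permutation of {0..<k}) on degree-k elements:
 (x_{i_1}...x_{i_k}) o pi = x_{i_{pi^-1(1)}} ... x_{i_{pi^-1(k)}}; hence the
 coefficient of a word w' in f o pi is the coefficient of w with w ! i = w' ! pi i.\<close>
definition pos_act :: "nat \<Rightarrow> (nat \<Rightarrow> nat) \<Rightarrow> fa \<Rightarrow> fa" where
  "pos_act k \<pi> f = (\<lambda>w'. if length w' = k then f (map (\<lambda>i. w' ! \<pi> i) [0..<k]) else 0)"

definition S_subalgebra :: "fa set \<Rightarrow> bool" where
  "S_subalgebra F \<longleftrightarrow>
     F \<subseteq> fa_carrier \<and> fa_one \<in> F \<and>
     (\<forall>f\<in>F. \<forall>g\<in>F. fa_add f g \<in> F) \<and>
     (\<forall>c. \<forall>f\<in>F. fa_smult c f \<in> F) \<and>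
     (\<forall>f\<in>F. \<forall>g\<in>F. fa_mult f g \<in> F) \<and>
     (\<forall>f\<in>F. \<forall>k. hom_part k f \<in> F) \<and>
     (\<forall>k f \<pi>. f \<in> F \<longrightarrow> homogeneous k f \<longrightarrow> \<pi> permutes {0..<k} \<longrightarrow> pos_act k \<pi> f \<in> F)"

definition S_generated :: "fa set \<Rightarrow> fa set" where
  "S_generated G = \<Inter> {F. S_subalgebra F \<and> G \<subseteq> F}"

text \<open>Dihedral action: rho^j tau^b, with rho(u) = xi u, rho(v) = xi^-1 v, tau swapping u, v.\<close>
definition xi :: "nat \<Rightarrow> complex" where "xi n = cis (2 * pi / real n)"

definition weight :: "bool list \<Rightarrow> int" where
  "weight w = int (length (filter Not w)) - int (length (filter id w))"

definition rho_act :: "nat \<Rightarrow> nat \<Rightarrow> fa \<Rightarrow> fa" where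
  "rho_act n j f = (\<lambda>w. (xi n) powi (int j * weight w) * f w)"

definition tau_act :: "fa \<Rightarrow> fa" where
  "tau_act f = (\<lambda>w. f (map Not w))"

definition dih_act :: "nat \<Rightarrow> nat \<Rightarrow> bool \<Rightarrow> fa \<Rightarrow> fa" where
  "dih_act n j b f = rho_act n j (if b then tau_act f else f)"

definition dihedral_invariants :: "nat \<Rightarrow> fa set" where
  "dihedral_invariants n =
     {f \<in> fa_carrier. \<forall>j<n. \<forall>b. dih_act n j b f = f}"

end

theory Submission
  imports Defs
begin

text \<open>The invariants of the dihedral group are the finitely supported elements that are symmetric
under swapping \<open>u\<close> and \<open>v\<close> and supported on words whose weight (number of \<open>u\<close> minus number of
\<open>v\<close>) is divisible by \<open>n\<close>; they form an S-subalgebra, and they are spanned by the symmetrized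
monomials \<open>w + \<tau> w\<close> of such words. An S-subalgebra containing \<open>w + \<tau> w\<close> contains the
symmetrization of every rearrangement of \<open>w\<close>, so induction on the length generates all of them
from \<open>uv + vu\<close> and \<open>u^n + v^n\<close>. A word containing both letters can be rearranged as \<open>y y' y g\<close>
(\<open>y'\<close> the other letter), whose symmetrization is a combination of position-permuted copies of
\<open>(uv + vu)(y g + \<tau>(y g))\<close>. The symmetrization of \<open>u^(n+m)\<close>, \<open>m > 0\<close>, is
\<open>(u^n + v^n)(u^m + v^m)\<close> minus that of the mixed word \<open>u^n v^m\<close>.\<close>

lemma fa_mult_fa_mono: "fa_mult (fa_mono a) (fa_mono b) = fa_mono (a @ b)"
proof
  fix w
  have split_iff: "take i w = a \<and> drop i w = b \<longleftrightarrow> i = length a \<and> w = a @ b"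
    if "i \<le> length w" for i
    using that by (auto simp: min_def)
  have "fa_mult (fa_mono a) (fa_mono b) w
      = (\<Sum>i\<le>length w. if i = length a \<and> w = a @ b then 1 else 0)"
    unfolding fa_mult_def fa_mono_def
  proof (intro sum.cong refl)
    fix i assume "i \<in> {..length w}"
    then show "(if take i w = a then 1 else 0) * (if drop i w = b then 1 else 0)
        = (if i = length a \<and> w = a @ b then 1 else (0::complex))"
      using split_iff[of i] by auto
  qed
  also have "\<dots> = fa_mono (a @ b) w"
    by (auto simp: fa_mono_def)
  finally show "fa_mult (fa_mono a) (fa_mono b) w = fa_mono (a @ b) w" .
qed

lemma fa_mult_fa_add_left: "fa_mult (fa_add f g) h = fa_add (fa_mult f h) (fa_mult g h)"
  by (simp add: fa_mult_def fa_add_def algebra_simps sum.distrib)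

lemma fa_mult_fa_add_right: "fa_mult f (fa_add g h) = fa_add (fa_mult f g) (fa_mult f h)"
  by (simp add: fa_mult_def fa_add_def algebra_simps sum.distrib)

lemma fa_pow_fa_mono_singleton: "fa_pow (fa_mono [x]) m = fa_mono (replicate m x)"
proof (induction m)
  case 0
  show ?case by (rule ext) (simp add: fa_one_def fa_mono_def)
qed (simp add: fa_mult_fa_mono)

lemma homogeneous_fa_add: "homogeneous k f \<Longrightarrow> homogeneous k g \<Longrightarrow> homogeneous k (fa_add f g)"
  unfolding homogeneous_def fa_add_def by auto

lemma permute_list_inv_permute_list:
  assumes "p permutes {..<length xs}"
  shows "permute_list (inv p) (permute_list p xs) = xs"
  using permute_list_compose[OF permutes_inv[OF assms], of p, symmetric]
  by (simp add: permutes_inv_o[OF assms])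

lemma permute_list_permute_list_inv:
  assumes "p permutes {..<length xs}"
  shows "permute_list p (permute_list (inv p) xs) = xs"
  using permute_list_compose[OF assms, of "inv p", symmetric]
  by (simp add: permutes_inv_o[OF assms])

lemma permute_list_transpose:
  assumes "i < length xs" "j < length xs"
  shows "permute_list (Transposition.transpose i j) xs = xs[i := xs ! j, j := xs ! i]"
proof (rule nth_equalityI)
  have perm: "Transposition.transpose i j permutes {..<length xs}"
    using assms by (simp add: permutes_swap_id)
  fix k assume "k < length (permute_list (Transposition.transpose i j) xs)"
  then have k: "k < length xs" by simp
  have "permute_list (Transposition.transpose i j) xs ! k = xs ! Transposition.transpose i j k"
    using permute_list_nth[OF perm k] .
  then show "permute_list (Transposition.transpose i j) xs ! k = xs[i := xs ! j, j := xs ! i] ! k"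
    using assms k by (simp add: nth_list_update transpose_def)
qed simp

lemma map_Not_eq_iff: "map Not xs = ys \<longleftrightarrow> xs = map Not ys"
  by (auto simp: comp_def)

lemma bool_list_eq_replicate:
  fixes w :: "bool list"
  assumes "b \<notin> set w"
  shows "w = replicate (length w) (\<not> b)"
proof (rule replicate_length_same[symmetric], rule ballI)
  fix x assume "x \<in> set w"
  with assms show "x = (\<not> b)"
    by (cases x; cases b) auto
qed

lemma weight_Nil [simp]: "weight [] = 0"
  by (simp add: weight_def)

lemma weight_Cons [simp]: "weight (x # xs) = (if x then -1 else 1) + weight xs"
  by (simp add: weight_def)

lemma weight_append [simp]: "weight (xs @ ys) = weight xs + weight ys"
  by (induction xs) auto

lemma weight_map_Not [simp]: "weight (map Not xs) = - weight xs"
  by (induction xs) auto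

lemma weight_replicate [simp]: "weight (replicate k x) = (if x then - int k else int k)"
  by (induction k) auto

lemma weight_eq_count: "weight xs = int (count (mset xs) False) - int (count (mset xs) True)"
  by (induction xs) auto

lemma weight_mset_eq: "mset xs = mset ys \<Longrightarrow> weight xs = weight ys"
  by (simp add: weight_eq_count)

lemma pos_act_apply: "pos_act k \<pi> f w = (if length w = k then f (permute_list \<pi> w) else 0)"
  by (simp add: pos_act_def permute_list_def)

lemma pos_act_fa_mono:
  assumes \<pi>: "\<pi> permutes {0..<k}" and z: "length z = k"
  shows "pos_act k \<pi> (fa_mono z) = fa_mono (permute_list (inv \<pi>) z)"
proof
  fix w
  show "pos_act k \<pi> (fa_mono z) w = fa_mono (permute_list (inv \<pi>) z) w"
  proof (cases "length w = k")
    case True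
    have perm_w: "\<pi> permutes {..<length w}" and perm_z: "\<pi> permutes {..<length z}"
      using \<pi> True z by (simp_all add: atLeast0LessThan)
    have "permute_list \<pi> w = z \<longleftrightarrow> w = permute_list (inv \<pi>) z"
    proof
      assume "permute_list \<pi> w = z"
      then show "w = permute_list (inv \<pi>) z"
        using permute_list_inv_permute_list[OF perm_w] by simp
    next
      assume "w = permute_list (inv \<pi>) z"
      then show "permute_list \<pi> w = z"
        using permute_list_permute_list_inv[OF perm_z] by simp
    qed
    then show ?thesis
      using True by (simp add: pos_act_apply fa_mono_def)
  next
    case False
    then show ?thesis using z by (auto simp: pos_act_apply fa_mono_def)
  qed
qed

lemma pos_act_fa_add: "pos_act k \<pi> (fa_add f g) = fa_add (pos_act k \<pi> f) (pos_act k \<pi> g)"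
  by (rule ext) (simp add: pos_act_def fa_add_def)

section \<open>Symmetrized monomials\<close>

definition sym_mono :: "bool list \<Rightarrow> fa" where
  "sym_mono w = fa_add (fa_mono w) (fa_mono (map Not w))"

lemma sym_mono_map_Not: "sym_mono (map Not w) = sym_mono w"
  unfolding sym_mono_def by (rule ext) (simp add: fa_add_def comp_def)

lemma sym_mono_Nil: "sym_mono [] = fa_smult 2 fa_one"
  unfolding sym_mono_def by (rule ext) (simp add: fa_add_def fa_smult_def fa_one_def fa_mono_def)

lemma fa_mult_sym_mono: "fa_mult (sym_mono a) (sym_mono b) = fa_add (sym_mono (a @ b)) (sym_mono (a @ map Not b))"
  unfolding sym_mono_def fa_mult_fa_add_left fa_mult_fa_add_right fa_mult_fa_mono
  by (rule ext) (simp add: fa_add_def comp_def)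

lemma homogeneous_sym_mono: "homogeneous (length w) (sym_mono w)"
  unfolding homogeneous_def sym_mono_def fa_add_def fa_mono_def by auto

lemma pos_act_sym_mono:
  assumes "\<pi> permutes {0..<k}" "length z = k"
  shows "pos_act k \<pi> (sym_mono z) = sym_mono (permute_list (inv \<pi>) z)"
  using assms
  by (simp add: sym_mono_def pos_act_fa_add pos_act_fa_mono permute_list_map permutes_inv atLeast0LessThan)

lemma pos_act_transpose_sym_mono:
  assumes "length z = k" "i < k" "j < k"
  shows "pos_act k (Transposition.transpose i j) (sym_mono z) = sym_mono (z[i := z ! j, j := z ! i])"
  using assms by (simp add: pos_act_sym_mono permutes_swap_id permute_list_transpose)

section \<open>Generating the symmetrized monomials\<close>

lemma S_subalgebra_one: "S_subalgebra F \<Longrightarrow> fa_one \<in> F"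
  unfolding S_subalgebra_def by blast

lemma S_subalgebra_add: "S_subalgebra F \<Longrightarrow> f \<in> F \<Longrightarrow> g \<in> F \<Longrightarrow> fa_add f g \<in> F"
  unfolding S_subalgebra_def by blast

lemma S_subalgebra_smult: "S_subalgebra F \<Longrightarrow> f \<in> F \<Longrightarrow> fa_smult c f \<in> F"
  unfolding S_subalgebra_def by blast

lemma S_subalgebra_mult: "S_subalgebra F \<Longrightarrow> f \<in> F \<Longrightarrow> g \<in> F \<Longrightarrow> fa_mult f g \<in> F"
  unfolding S_subalgebra_def by blast

lemma S_subalgebra_pos_act:
  "S_subalgebra F \<Longrightarrow> f \<in> F \<Longrightarrow> homogeneous k f \<Longrightarrow> \<pi> permutes {0..<k} \<Longrightarrow> pos_act k \<pi> f \<in> F"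
  unfolding S_subalgebra_def by blast

lemma S_subalgebra_sum:
  assumes F: "S_subalgebra F" and "finite A" and "\<And>x. x \<in> A \<Longrightarrow> g x \<in> F"
  shows "(\<lambda>w. \<Sum>x\<in>A. c x * g x w) \<in> F"
  using assms(2,3)
proof (induction A rule: finite_induct)
  case empty
  have "(\<lambda>w. 0) = fa_smult 0 fa_one" by (simp add: fa_smult_def)
  then show ?case using S_subalgebra_smult[OF F S_subalgebra_one[OF F]] by simp
next
  case (insert x A)
  have "(\<lambda>w. \<Sum>y\<in>insert x A. c y * g y w) = fa_add (fa_smult (c x) (g x)) (\<lambda>w. \<Sum>y\<in>A. c y * g y w)"
    using insert.hyps by (simp add: fa_add_def fa_smult_def)
  then show ?case
    using insert by (simp add: S_subalgebra_add[OF F] S_subalgebra_smult[OF F])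
qed

lemma sym_mono_mem_if_mset_eq:
  assumes F: "S_subalgebra F" and "sym_mono w \<in> F" and "mset w' = mset w"
  shows "sym_mono w' \<in> F"
proof -
  obtain p where p: "p permutes {..<length w'}" "permute_list p w' = w"
    using mset_eq_permutation[OF assms(3)[symmetric]] by blast
  have len: "length w = length w'"
    using p(2) by auto
  have "pos_act (length w') p (sym_mono w) \<in> F"
    using S_subalgebra_pos_act[OF F assms(2)] homogeneous_sym_mono[of w] p(1) len
    by (simp add: atLeast0LessThan)
  moreover have "permute_list (inv p) w = w'"
    using permute_list_inv_permute_list[OF p(1)] p(2) by simp
  ultimately show ?thesis
    using p(1) len by (simp add: pos_act_sym_mono atLeast0LessThan)
qed

lemma sym_mono_triangle_mem:
  assumes F: "S_subalgebra F" and p: "sym_mono [False, True] \<in> F" and "sym_mono (y # g) \<in> F"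
  shows "sym_mono (y # (\<not> y) # y # g) \<in> F"
proof -
  let ?X = "fa_add (sym_mono (False # True # y # g)) (sym_mono (True # False # y # g))"
  let ?k = "length (False # True # y # g)"
  have "fa_mult (sym_mono [False, True]) (sym_mono (y # g)) = ?X"
    using sym_mono_map_Not[of "True # False # y # g"] by (simp add: fa_mult_sym_mono)
  then have X: "?X \<in> F"
    using S_subalgebra_mult[OF F p assms(3)] by simp
  have hom: "homogeneous ?k ?X"
    using homogeneous_sym_mono[of "False # True # y # g"] homogeneous_sym_mono[of "True # False # y # g"]
    by (simp add: homogeneous_fa_add)
  have "pos_act ?k (Transposition.transpose i j) ?X \<in> F" if "i < 3" "j < 3" for i j
    using that by (intro S_subalgebra_pos_act[OF F X hom] permutes_swap_id) auto
  from this[of 0 2] this[of 1 2]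
  have X02: "fa_add (sym_mono (y # True # False # g)) (sym_mono (y # False # True # g)) \<in> F"
    and X12: "fa_add (sym_mono (False # y # True # g)) (sym_mono (True # y # False # g)) \<in> F"
    by (simp_all add: pos_act_fa_add pos_act_transpose_sym_mono numeral_2_eq_2)
  \<comment> \<open>In \<open>X + X02 - X12\<close> every term cancels except that of \<open>y y' y g\<close>, which occurs twice.\<close>
  have "sym_mono (y # (\<not> y) # y # g)
      = fa_smult (1/2) (fa_add (fa_add ?X (fa_add (sym_mono (y # True # False # g)) (sym_mono (y # False # True # g))))
          (fa_smult (-1) (fa_add (sym_mono (False # y # True # g)) (sym_mono (True # y # False # g)))))"
    by (cases y; rule ext) (simp_all add: sym_mono_def fa_add_def fa_smult_def fa_mono_def)
  then show ?thesis
    using X X02 X12 by (simp add: S_subalgebra_add[OF F] S_subalgebra_smult[OF F])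
qed

lemma mset_eq_Cons_Not_Cons:
  assumes "False \<in> set w" "True \<in> set w" "3 \<le> length w"
  obtains y g where "mset w = mset (y # (\<not> y) # y # g)"
proof -
  have both: "count (mset w) False + count (mset w) True = length w"
    by (induction w) auto
  have "1 \<le> count (mset w) False" "1 \<le> count (mset w) True"
    using assms(1,2) by (simp_all add: Suc_le_eq)
  then obtain y where y2: "2 \<le> count (mset w) y" and y1: "1 \<le> count (mset w) (\<not> y)"
  proof (cases "2 \<le> count (mset w) False")
    case False
    then have "2 \<le> count (mset w) True"
      using both assms(3) by linarith
    with that[of True] \<open>1 \<le> count (mset w) False\<close> show ?thesis by simp
  qed simp
  have sub: "{#y, \<not> y, y#} \<subseteq># mset w"
    using y1 y2 by (cases y) (auto simp: subseteq_mset_def)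
  obtain g where "mset g = mset w - {#y, \<not> y, y#}"
    using ex_mset by blast
  then have "mset w = mset (y # (\<not> y) # y # g)"
    using subset_mset.diff_add[OF sub] by (simp add: add.commute)
  then show ?thesis by (rule that)
qed

lemma sym_mono_mixed_mem:
  assumes F: "S_subalgebra F" and p: "sym_mono [False, True] \<in> F"
    and shorter: "\<And>w'. length w' < length w \<Longrightarrow> int n dvd weight w' \<Longrightarrow> sym_mono w' \<in> F"
    and w: "False \<in> set w" "True \<in> set w" "int n dvd weight w"
  shows "sym_mono w \<in> F"
proof (cases "length w \<le> 2")
  case True
  with w(1,2) have "w = [False, True] \<or> w = map Not [False, True]"
    by (auto simp: le_Suc_eq length_Suc_conv numeral_2_eq_2)
  then show ?thesis
    using p sym_mono_map_Not[of "[False, True]"] by auto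
next
  case False
  then have "3 \<le> length w" by simp
  then obtain y g where yg: "mset w = mset (y # (\<not> y) # y # g)"
    by (rule mset_eq_Cons_Not_Cons[OF w(1,2)])
  have "length (y # g) < length w" and "weight (y # g) = weight w"
    using arg_cong[OF yg, of size] weight_mset_eq[OF yg] by auto
  then have "sym_mono (y # g) \<in> F"
    using shorter w(3) by simp
  then show ?thesis
    using sym_mono_mem_if_mset_eq[OF F sym_mono_triangle_mem[OF F p] yg] by blast
qed

lemma sym_mono_replicate_mem:
  assumes F: "S_subalgebra F" and "0 < n"
    and p: "sym_mono [False, True] \<in> F" and q: "sym_mono (replicate n False) \<in> F"
    and shorter: "\<And>w'. length w' < k \<Longrightarrow> int n dvd weight w' \<Longrightarrow> sym_mono w' \<in> F"
    and "n dvd k"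
  shows "sym_mono (replicate k False) \<in> F"
proof -
  consider "k = 0" | "k = n" | r where "k = n + r" "0 < r" "n dvd r"
  proof -
    consider "k = 0" | "k = n" | "n < k"
      using dvd_imp_le[OF \<open>n dvd k\<close>] by fastforce
    then show thesis
      using that(1,2) that(3)[of "k - n"] \<open>n dvd k\<close> by cases (auto simp: dvd_diff_nat)
  qed
  then show ?thesis
  proof cases
    case 1
    then show ?thesis
      using S_subalgebra_smult[OF F S_subalgebra_one[OF F]] by (simp add: sym_mono_Nil)
  next
    case 2
    then show ?thesis using q by simp
  next
    case 3
    let ?m = "replicate n False @ replicate r True"
    have r_mem: "sym_mono (replicate r False) \<in> F"
      using shorter 3 \<open>0 < n\<close> by simp
    have m_mem: "sym_mono ?m \<in> F"
    proof (rule sym_mono_mixed_mem[OF F p])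
      show "sym_mono w' \<in> F" if "length w' < length ?m" "int n dvd weight w'" for w'
        using shorter that 3 by simp
    qed (use 3 \<open>0 < n\<close> in auto)
    have "fa_mult (sym_mono (replicate n False)) (sym_mono (replicate r False))
        = fa_add (sym_mono (replicate k False)) (sym_mono ?m)"
      using 3(1) by (simp add: fa_mult_sym_mono replicate_add)
    then have "sym_mono (replicate k False)
        = fa_add (fa_mult (sym_mono (replicate n False)) (sym_mono (replicate r False)))
            (fa_smult (-1) (sym_mono ?m))"
      by (simp add: fa_add_def fa_smult_def)
    then show ?thesis
      using q r_mem m_mem by (simp add: S_subalgebra_add[OF F] S_subalgebra_mult[OF F] S_subalgebra_smult[OF F])
  qed
qed

lemma sym_mono_mem_if_weight_dvd:
  assumes F: "S_subalgebra F" and "0 < n"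
    and p: "sym_mono [False, True] \<in> F" and q: "sym_mono (replicate n False) \<in> F"
    and "int n dvd weight w"
  shows "sym_mono w \<in> F"
  using assms(5)
proof (induction "length w" arbitrary: w rule: less_induct)
  case less
  consider "False \<in> set w" "True \<in> set w" | k b where "w = replicate k b"
    using bool_list_eq_replicate by blast
  then show ?case
  proof cases
    case 1
    show ?thesis
      by (rule sym_mono_mixed_mem[OF F p less.hyps 1 less.prems])
  next
    case (2 k b)
    then have len: "length w = k"
      by simp
    have "n dvd k"
      using less.prems 2 by (cases b) simp_all
    moreover have "sym_mono w' \<in> F" if "length w' < k" "int n dvd weight w'" for w'
      using less.hyps that len by blast
    ultimately have "sym_mono (replicate k False) \<in> F"
      using sym_mono_replicate_mem[OF F \<open>0 < n\<close> p q] by blast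
    then show ?thesis
      using 2 sym_mono_map_Not[of "replicate k False"] by (cases b) simp_all
  qed
qed

section \<open>The invariant subalgebra\<close>

lemma xi_powi_eq_1_iff:
  assumes "0 < n"
  shows "xi n powi m = 1 \<longleftrightarrow> int n dvd m"
proof
  assume "xi n powi m = 1"
  then have "cis (of_int m * (2 * pi / real n)) = 1"
    by (simp add: xi_def cis_power_int)
  then have "cos (of_int m * (2 * pi / real n)) = 1"
    by (metis cis.sel(1) one_complex.sel(1))
  then obtain t :: int where "of_int m * (2 * pi / real n) = of_int t * 2 * pi"
    using cos_one_2pi_int by blast
  then have "real_of_int m = real_of_int t * real n"
    using assms by (simp add: field_simps)
  then have "m = t * int n"
    by (metis of_int_eq_iff of_int_mult of_int_of_nat_eq)
  then show "int n dvd m" by simp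
next
  assume "int n dvd m"
  then obtain t where "m = int n * t" by blast
  then have "of_int m * (2 * pi / real n) = 2 * pi * of_int t"
    using assms by (simp add: field_simps)
  then show "xi n powi m = 1"
    by (simp add: xi_def cis_power_int)
qed

lemma dihedral_invariants_iff:
  assumes "0 < n"
  shows "f \<in> dihedral_invariants n \<longleftrightarrow>
    f \<in> fa_carrier \<and> (\<forall>w. f w \<noteq> 0 \<longrightarrow> int n dvd weight w) \<and> (\<forall>w. f (map Not w) = f w)"
  (is "_ \<longleftrightarrow> ?char")
proof
  assume f: "f \<in> dihedral_invariants n"
  then have fixed: "dih_act n j b f = f" if "j < n" for j b
    using that by (simp add: dihedral_invariants_def)
  have "f (map Not w) = f w" for w
    using fun_cong[OF fixed[of 0 True], of w] assms by (simp add: dih_act_def rho_act_def tau_act_def)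
  moreover have "int n dvd weight w" if "f w \<noteq> 0" for w
  proof (cases "n = 1")
    case False
    then have "xi n powi weight w * f w = f w"
      using fun_cong[OF fixed[of 1 False], of w] assms by (simp add: dih_act_def rho_act_def)
    then show ?thesis
      using that xi_powi_eq_1_iff[OF assms] by simp
  qed simp
  ultimately show ?char
    using f by (simp add: dihedral_invariants_def)
next
  assume f: ?char
  then have tau: "tau_act f = f"
    by (simp add: tau_act_def)
  have "rho_act n j f = f" for j
  proof
    fix w
    show "rho_act n j f w = f w"
    proof (cases "f w = 0")
      case False
      then have "xi n powi (int j * weight w) = 1"
        using f xi_powi_eq_1_iff[OF assms] by simp
      then show ?thesis by (simp add: rho_act_def)
    qed (simp add: rho_act_def)
  qed
  then show "f \<in> dihedral_invariants n"
    using f tau by (simp add: dihedral_invariants_def dih_act_def)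
qed

lemma fa_mult_nonzeroE:
  assumes "fa_mult f g w \<noteq> 0"
  obtains i where "f (take i w) \<noteq> 0" "g (drop i w) \<noteq> 0"
proof -
  obtain i where "f (take i w) * g (drop i w) \<noteq> 0"
    using assms sum.not_neutral_contains_not_neutral unfolding fa_mult_def by blast
  then show ?thesis
    by (auto intro: that)
qed

lemma fa_mult_dihedral_invariants:
  assumes "0 < n" and f: "f \<in> dihedral_invariants n" and g: "g \<in> dihedral_invariants n"
  shows "fa_mult f g \<in> dihedral_invariants n"
proof -
  note inv = dihedral_invariants_iff[OF assms(1)]
  have "{w. fa_mult f g w \<noteq> 0} \<subseteq> (\<lambda>(a, b). a @ b) ` ({w. f w \<noteq> 0} \<times> {w. g w \<noteq> 0})"
  proof
    fix w assume "w \<in> {w. fa_mult f g w \<noteq> 0}"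
    then obtain i where "f (take i w) \<noteq> 0" "g (drop i w) \<noteq> 0"
      by (auto elim: fa_mult_nonzeroE)
    then show "w \<in> (\<lambda>(a, b). a @ b) ` ({w. f w \<noteq> 0} \<times> {w. g w \<noteq> 0})"
      by (intro image_eqI[of _ _ "(take i w, drop i w)"]) auto
  qed
  moreover have "finite {w. f w \<noteq> 0}" "finite {w. g w \<noteq> 0}"
    using f g by (simp_all add: inv fa_carrier_def)
  ultimately have "fa_mult f g \<in> fa_carrier"
    unfolding fa_carrier_def mem_Collect_eq by (blast intro: finite_subset)
  moreover have "int n dvd weight w" if nonzero: "fa_mult f g w \<noteq> 0" for w
  proof -
    obtain i where "f (take i w) \<noteq> 0" "g (drop i w) \<noteq> 0"
      using nonzero by (rule fa_mult_nonzeroE)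
    then have "int n dvd weight (take i w)" "int n dvd weight (drop i w)"
      using f g by (simp_all add: inv)
    then show ?thesis
      using weight_append[of "take i w" "drop i w"] by simp
  qed
  moreover have "fa_mult f g (map Not w) = fa_mult f g w" for w
  proof -
    have "f (map Not v) = f v" "g (map Not v) = g v" for v
      using f g by (simp_all add: inv)
    then show ?thesis
      by (simp add: fa_mult_def take_map drop_map)
  qed
  ultimately show ?thesis
    by (simp add: inv)
qed

lemma pos_act_dihedral_invariants:
  assumes "0 < n" and f: "f \<in> dihedral_invariants n" and \<pi>: "\<pi> permutes {0..<k}"
  shows "pos_act k \<pi> f \<in> dihedral_invariants n"
proof -
  note inv = dihedral_invariants_iff[OF assms(1)]
  have "{w. pos_act k \<pi> f w \<noteq> 0} \<subseteq> {w. length w = k}"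
    by (auto simp: pos_act_apply)
  moreover have "finite {w :: bool list. length w = k}"
    using finite_lists_length_eq[of "UNIV :: bool set" k] by simp
  ultimately have "pos_act k \<pi> f \<in> fa_carrier"
    unfolding fa_carrier_def mem_Collect_eq by (rule finite_subset)
  moreover have "int n dvd weight w" if nonzero: "pos_act k \<pi> f w \<noteq> 0" for w
  proof -
    have len: "length w = k" and "f (permute_list \<pi> w) \<noteq> 0"
      using nonzero by (simp_all add: pos_act_apply split: if_splits)
    then have "int n dvd weight (permute_list \<pi> w)"
      using f by (simp add: inv)
    moreover have "mset (permute_list \<pi> w) = mset w"
      using \<pi> len by (simp add: atLeast0LessThan)
    ultimately show ?thesis
      using weight_mset_eq by metis
  qed
  moreover have "pos_act k \<pi> f (map Not w) = pos_act k \<pi> f w" for w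
  proof (cases "length w = k")
    case True
    then have "permute_list \<pi> (map Not w) = map Not (permute_list \<pi> w)"
      using \<pi> by (simp add: permute_list_map atLeast0LessThan)
    moreover have "f (map Not v) = f v" for v
      using f by (simp add: inv)
    ultimately show ?thesis
      using True by (simp add: pos_act_apply)
  qed (simp add: pos_act_apply)
  ultimately show ?thesis
    by (simp add: inv)
qed

lemma S_subalgebra_dihedral_invariants:
  assumes "0 < n"
  shows "S_subalgebra (dihedral_invariants n)"
  unfolding S_subalgebra_def
proof (intro conjI ballI allI impI)
  note inv = dihedral_invariants_iff[OF assms]
  show "dihedral_invariants n \<subseteq> fa_carrier"
    using inv by blast
  show "fa_one \<in> dihedral_invariants n"
    unfolding inv by (auto simp: fa_one_def fa_carrier_def)
  fix f g assume f: "f \<in> dihedral_invariants n"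
  show "fa_mult f g \<in> dihedral_invariants n" if "g \<in> dihedral_invariants n"
    using fa_mult_dihedral_invariants[OF assms f that] .
  show "pos_act k \<pi> f \<in> dihedral_invariants n" if "\<pi> permutes {0..<k}" for k \<pi>
    using pos_act_dihedral_invariants[OF assms f that] .
  show "fa_add f g \<in> dihedral_invariants n" if "g \<in> dihedral_invariants n"
  proof -
    have "{w. fa_add f g w \<noteq> 0} \<subseteq> {w. f w \<noteq> 0} \<union> {w. g w \<noteq> 0}"
      by (auto simp: fa_add_def)
    then show ?thesis
      using f that unfolding inv by (auto simp: fa_add_def fa_carrier_def intro: finite_subset)
  qed
  show "fa_smult c f \<in> dihedral_invariants n" for c
    using f unfolding inv by (auto simp: fa_smult_def fa_carrier_def elim: rev_finite_subset)
  show "hom_part k f \<in> dihedral_invariants n" for k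
    using f unfolding inv by (auto simp: hom_part_def fa_carrier_def elim: rev_finite_subset)
qed

lemma sym_mono_dihedral_invariants:
  assumes "0 < n" "int n dvd weight w"
  shows "sym_mono w \<in> dihedral_invariants n"
proof -
  have "{z. sym_mono w z \<noteq> 0} \<subseteq> {w, map Not w}"
    by (auto simp: sym_mono_def fa_add_def fa_mono_def)
  then have "sym_mono w \<in> fa_carrier"
    unfolding fa_carrier_def by (auto intro: finite_subset)
  moreover have "int n dvd weight z" if "sym_mono w z \<noteq> 0" for z
    using that assms(2) by (auto simp: sym_mono_def fa_add_def fa_mono_def split: if_splits)
  moreover have "sym_mono w (map Not z) = sym_mono w z" for z
    by (auto simp: sym_mono_def fa_add_def fa_mono_def map_Not_eq_iff comp_def)
  ultimately show ?thesis
    unfolding dihedral_invariants_iff[OF assms(1)] by blast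
qed

lemma dihedral_invariants_subset:
  assumes F: "S_subalgebra F" and "0 < n"
    and p: "sym_mono [False, True] \<in> F" and q: "sym_mono (replicate n False) \<in> F"
  shows "dihedral_invariants n \<subseteq> F"
proof
  fix f assume "f \<in> dihedral_invariants n"
  then have finite: "finite {w. f w \<noteq> 0}" and weight: "\<And>w. f w \<noteq> 0 \<Longrightarrow> int n dvd weight w"
    and swap: "\<And>w. f (map Not w) = f w"
    by (auto simp: dihedral_invariants_iff[OF \<open>0 < n\<close>] fa_carrier_def)
  define S where "S = {w. f w \<noteq> 0}"
  have expansion: "f = fa_smult (1/2) (\<lambda>z. \<Sum>w\<in>S. f w * sym_mono w z)"
  proof
    fix z
    have "(\<Sum>w\<in>S. f w * sym_mono w z)
        = (\<Sum>w\<in>S. if w = z then f w else 0) + (\<Sum>w\<in>S. if w = map Not z then f w else 0)"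
      unfolding sum.distrib[symmetric]
      by (intro sum.cong refl) (auto simp: sym_mono_def fa_add_def fa_mono_def map_Not_eq_iff comp_def)
    also have "\<dots> = f z + f (map Not z)"
      using finite unfolding S_def by (simp add: sum.delta')
    also have "\<dots> = 2 * f z"
      using swap by simp
    finally show "f z = fa_smult (1/2) (\<lambda>z. \<Sum>w\<in>S. f w * sym_mono w z) z"
      by (simp add: fa_smult_def)
  qed
  have "sym_mono w \<in> F" if "w \<in> S" for w
    using that weight unfolding S_def by (intro sym_mono_mem_if_weight_dvd[OF F \<open>0 < n\<close> p q]) auto
  then have "(\<lambda>z. \<Sum>w\<in>S. f w * sym_mono w z) \<in> F"
    using finite unfolding S_def by (intro S_subalgebra_sum[OF F])
  then show "f \<in> F"
    by (subst expansion) (rule S_subalgebra_smult[OF F])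
qed

theorem mainTheorem3:
  fixes n :: nat
  assumes "n \<ge> 3"
  shows "S_generated {fa_add (fa_mult fa_u fa_v) (fa_mult fa_v fa_u),
                      fa_add (fa_pow fa_u n) (fa_pow fa_v n)}
         = dihedral_invariants n"
proof -
  let ?G = "{sym_mono [False, True], sym_mono (replicate n False)}"
  have "0 < n"
    using assms by simp
  have generators: "{fa_add (fa_mult fa_u fa_v) (fa_mult fa_v fa_u), fa_add (fa_pow fa_u n) (fa_pow fa_v n)} = ?G"
    by (simp add: fa_u_def fa_v_def fa_mult_fa_mono fa_pow_fa_mono_singleton sym_mono_def)
  have "?G \<subseteq> dihedral_invariants n"
    using sym_mono_dihedral_invariants[OF \<open>0 < n\<close>] by simp
  then have "S_generated ?G \<subseteq> dihedral_invariants n"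
    unfolding S_generated_def using S_subalgebra_dihedral_invariants[OF \<open>0 < n\<close>] by blast
  moreover have "dihedral_invariants n \<subseteq> S_generated ?G"
    unfolding S_generated_def using dihedral_invariants_subset[OF _ \<open>0 < n\<close>] by blast
  ultimately show ?thesis
    unfolding generators by (rule antisym)
qed

end
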